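(* Let $P$ be a monotone irreducible positive recurrent stochastic kernel on $\mathbb{N}=\{1,2,\dots\}$ with stationary distribution $\pi>0$, and let $N\ge2$. Let $P_N$ be the truncated kernel on $I_N=\{1,\dots,N\}$ defined by: for $x<N$, $P_N(x,y)=P(x,y)$ for $y<N$ and $P_N(x,N)=\sum_{z\ge N}P(x,z)$; and $P_N(N,y)=\overline{\pi}(N)^{-1}\sum_{z\ge N}\pi(z)P(z,y)$ for $y<N$, $P_N(N,N)=\overline{\pi}(N)^{-1}\sum_{z\ge N}\pi(z)\sum_{u\ge N}P(z,u)$, where $\overline{\pi}(N)=\sum_{z\ge N}\pi(z)$. Then $P_N$ is a monotone kernel on $I_N$, and it has a nonnegative Siegmund dual $\widehat{P}_N$ on $I_N$, i.e. there is a matrix $\widehat{P}_N=(\widehat{P}_N(x,y):x,y\in I_N)$ with nonnegative entries satisfying $H^S\widehat{P}_N^{\,\prime}=P_NH^S$, and $N$ is an absorbing state for $\widehat{P}_N$ (that is, $\widehat{P}_N(N,y)=\delta_{y,N}$ for $y\in I_N$).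
   Context: A stochastic kernel $Q$ on $I$ (with $I=\mathbb{N}$ or $I=I_N$) is monotone if for every $y\in I$ the map $x\mapsto\sum_{z\le y}Q(x,z)$ is decreasing in $x\in I$. The Siegmund kernel on $I_N$ is $H^S(x,y)=\mathbf{1}(x\le y)$, $x,y\in I_N$, and $M'$ denotes the transpose of a matrix $M$. *)

theory Defs
  imports "HOL-Analysis.Analysis"
begin

text \<open>Kernels are functions nat => nat => real; only the values on the index
set I (here {1..} = the paper's N, or {1..N} = I_N) matter.\<close>

definition stochastic_kernel :: "nat set \<Rightarrow> (nat \<Rightarrow> nat \<Rightarrow> real) \<Rightarrow> bool" where
  "stochastic_kernel I Q \<longleftrightarrow>
     (\<forall>x\<in>I. (\<forall>y\<in>I. 0 \<le> Q x y) \<and> ((Q x) has_sum 1) I)"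

definition monotone_kernel :: "nat set \<Rightarrow> (nat \<Rightarrow> nat \<Rightarrow> real) \<Rightarrow> bool" where
  "monotone_kernel I Q \<longleftrightarrow>
     (\<forall>y\<in>I. \<forall>x\<in>I. \<forall>x'\<in>I. x \<le> x' \<longrightarrow>
        (\<Sum>z\<in>{z\<in>I. z \<le> y}. Q x' z) \<le> (\<Sum>z\<in>{z\<in>I. z \<le> y}. Q x z))"

fun kernel_pow :: "nat set \<Rightarrow> (nat \<Rightarrow> nat \<Rightarrow> real) \<Rightarrow> nat \<Rightarrow> nat \<Rightarrow> nat \<Rightarrow> real" where
  "kernel_pow I Q 0 x y = (if x = y then 1 else 0)"
| "kernel_pow I Q (Suc n) x y = (\<Sum>\<^sub>\<infinity>z\<in>I. kernel_pow I Q n x z * Q z y)"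

definition irreducible_kernel :: "nat set \<Rightarrow> (nat \<Rightarrow> nat \<Rightarrow> real) \<Rightarrow> bool" where
  "irreducible_kernel I Q \<longleftrightarrow> (\<forall>x\<in>I. \<forall>y\<in>I. \<exists>n. kernel_pow I Q n x y > 0)"

fun first_passage :: "nat set \<Rightarrow> (nat \<Rightarrow> nat \<Rightarrow> real) \<Rightarrow> nat \<Rightarrow> nat \<Rightarrow> nat \<Rightarrow> real" where
  "first_passage I Q 0 x y = 0"
| "first_passage I Q (Suc 0) x y = Q x y"
| "first_passage I Q (Suc (Suc n)) x y =
     (\<Sum>\<^sub>\<infinity>z\<in>I - {y}. Q x z * first_passage I Q (Suc n) z y)"

definition positive_recurrent :: "nat set \<Rightarrow> (nat \<Rightarrow> nat \<Rightarrow> real) \<Rightarrow> bool" where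
  "positive_recurrent I Q \<longleftrightarrow>
     (\<forall>x\<in>I. ((\<lambda>n. first_passage I Q n x x) has_sum 1) UNIV \<and>
            (\<lambda>n. real n * first_passage I Q n x x) summable_on UNIV)"

definition stationary_distribution :: "nat set \<Rightarrow> (nat \<Rightarrow> nat \<Rightarrow> real) \<Rightarrow> (nat \<Rightarrow> real) \<Rightarrow> bool" where
  "stationary_distribution I Q \<pi> \<longleftrightarrow>
     (\<forall>x\<in>I. 0 \<le> \<pi> x) \<and> (\<pi> has_sum 1) I \<and>
     (\<forall>y\<in>I. ((\<lambda>z. \<pi> z * Q z y) has_sum \<pi> y) I)"

definition pibar :: "(nat \<Rightarrow> real) \<Rightarrow> nat \<Rightarrow> real" where
  "pibar \<pi> N = (\<Sum>\<^sub>\<infinity>z\<in>{N..}. \<pi> z)"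

definition truncated_kernel :: "(nat \<Rightarrow> nat \<Rightarrow> real) \<Rightarrow> (nat \<Rightarrow> real) \<Rightarrow> nat \<Rightarrow> nat \<Rightarrow> nat \<Rightarrow> real" where
  "truncated_kernel P \<pi> N x y =
     (if x < N then
        (if y < N then P x y else (\<Sum>\<^sub>\<infinity>z\<in>{N..}. P x z))
      else
        (if y < N then (\<Sum>\<^sub>\<infinity>z\<in>{N..}. \<pi> z * P z y) / pibar \<pi> N
         else (\<Sum>\<^sub>\<infinity>z\<in>{N..}. \<pi> z * (\<Sum>\<^sub>\<infinity>u\<in>{N..}. P z u)) / pibar \<pi> N))"

definition siegmund :: "nat \<Rightarrow> nat \<Rightarrow> real" where
  "siegmund x y = (if x \<le> y then 1 else 0)"

end

theory Submission
  imports Defs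
begin

text \<open>
  Monotonicity of the truncated kernel is inherited from \<open>P\<close>: its rows \<open>x < N\<close> are rows
  of \<open>P\<close> with the mass beyond \<open>N\<close> lumped into \<open>N\<close>, and the cumulative sums of its
  last row are a \<open>\<pi>\<close>-average of those of the rows \<open>z \<ge> N\<close> of \<open>P\<close>, each of which
  is dominated by those of any row \<open>x < N\<close>.  For a monotone stochastic kernel \<open>Q\<close> on
  \<open>{1..N}\<close>, the matrix with entries \<open>\<Sum>u\<le>y. (Q(z, u) - Q(z + 1, u))\<close> at \<open>(y, z)\<close>,
  row \<open>N + 1\<close> of \<open>Q\<close> read as zero, is then a Siegmund dual: its entries are
  nonnegative by monotonicity, the duality relation is a telescoping sum, and its row
  \<open>N\<close> is the unit vector at \<open>N\<close> because the rows of \<open>Q\<close> sum to one.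
\<close>

lemma has_sum_sum:
  fixes f :: "'i \<Rightarrow> 'a \<Rightarrow> 'b::topological_comm_monoid_add"
  assumes "finite I" and "\<And>i. i \<in> I \<Longrightarrow> (f i has_sum s i) A"
  shows "((\<lambda>x. \<Sum>i\<in>I. f i x) has_sum (\<Sum>i\<in>I. s i)) A"
  using assms by (induction I rule: finite_induct) (auto intro: has_sum_add)

lemma monotone_kernel_atLeast_cumulative_le:
  assumes "monotone_kernel {1..} P" and "1 \<le> x" and "x \<le> x'"
  shows "(\<Sum>z\<in>{1..y}. P x' z) \<le> (\<Sum>z\<in>{1..y}. P x z)"
proof (cases "y = 0")
  case False
  then have "y \<in> {1..}" and "x \<in> {1..}" and "x' \<in> {1..}"
    using assms(2,3) by auto
  with assms(1,3) have "(\<Sum>z\<in>{z\<in>{1..}. z \<le> y}. P x' z) \<le> (\<Sum>z\<in>{z\<in>{1..}. z \<le> y}. P x z)"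
    unfolding monotone_kernel_def by blast
  moreover have "{z\<in>{1..}. z \<le> y} = {1..y}"
    by auto
  ultimately show ?thesis
    by simp
qed simp

locale kernel_truncation =
  fixes P :: "nat \<Rightarrow> nat \<Rightarrow> real" and \<pi> :: "nat \<Rightarrow> real" and N :: nat
  assumes stochastic: "stochastic_kernel {1..} P"
    and weight_nonneg: "\<And>x. 1 \<le> x \<Longrightarrow> 0 \<le> \<pi> x"
    and weight_summable: "\<pi> summable_on {1..}"
    and pibar_pos: "pibar \<pi> N > 0"
    and N_pos: "1 \<le> N"
begin

lemma P_nonneg: "1 \<le> x \<Longrightarrow> 1 \<le> y \<Longrightarrow> 0 \<le> P x y"
  using stochastic unfolding stochastic_kernel_def by auto

lemma P_has_sum: "1 \<le> x \<Longrightarrow> (P x has_sum 1) {1..}"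
  using stochastic unfolding stochastic_kernel_def by auto

lemma P_summable_on_subset: "1 \<le> x \<Longrightarrow> B \<subseteq> {1..} \<Longrightarrow> P x summable_on B"
  using P_has_sum summable_on_subset_banach summable_on_def by blast

lemma P_infsum_le_one:
  assumes "1 \<le> x" and "B \<subseteq> {1..}"
  shows "(\<Sum>\<^sub>\<infinity>u\<in>B. P x u) \<le> 1"
proof -
  have "(\<Sum>\<^sub>\<infinity>u\<in>B. P x u) \<le> (\<Sum>\<^sub>\<infinity>u\<in>{1..}. P x u)"
    using assms P_nonneg
    by (intro infsum_mono_neutral P_summable_on_subset) auto
  with P_has_sum[OF assms(1)] show ?thesis
    by (simp add: infsumI)
qed

lemma P_le_one:
  assumes "1 \<le> x" and "1 \<le> y"
  shows "P x y \<le> 1"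
proof -
  have "(\<Sum>\<^sub>\<infinity>u\<in>{y}. P x u) \<le> 1"
    using assms by (intro P_infsum_le_one) auto
  then show ?thesis by simp
qed

lemma P_tail_nonneg: "1 \<le> x \<Longrightarrow> 0 \<le> (\<Sum>\<^sub>\<infinity>u\<in>{N..}. P x u)"
  using N_pos P_nonneg by (intro infsum_nonneg) auto

lemma P_tail_le_one: "1 \<le> x \<Longrightarrow> (\<Sum>\<^sub>\<infinity>u\<in>{N..}. P x u) \<le> 1"
  using N_pos by (intro P_infsum_le_one) auto

lemma P_row_split: "1 \<le> x \<Longrightarrow> (\<Sum>y\<in>{1..<N}. P x y) + (\<Sum>\<^sub>\<infinity>u\<in>{N..}. P x u) = 1"
proof -
  assume x: "1 \<le> x"
  have "(\<Sum>\<^sub>\<infinity>u\<in>{1..<N} \<union> {N..}. P x u) = (\<Sum>\<^sub>\<infinity>u\<in>{1..<N}. P x u) + (\<Sum>\<^sub>\<infinity>u\<in>{N..}. P x u)"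
    using x N_pos by (intro infsum_Un_disjoint P_summable_on_subset) auto
  also have "{1..<N} \<union> {N..} = {1..}"
    using N_pos by auto
  finally show ?thesis
    using infsumI[OF P_has_sum[OF x]] by simp
qed

lemma weight_tail_summable: "\<pi> summable_on {N..}"
  by (rule summable_on_subset_banach[OF weight_summable]) (use N_pos in auto)

lemma weighted_tail_has_sum:
  assumes "\<And>z. N \<le> z \<Longrightarrow> 0 \<le> g z \<and> g z \<le> 1"
  shows "((\<lambda>z. \<pi> z * g z) has_sum (\<Sum>\<^sub>\<infinity>z\<in>{N..}. \<pi> z * g z)) {N..}"
proof -
  have "(\<lambda>z. \<pi> z * g z) summable_on {N..}"
    using assms N_pos weight_nonneg
    by (intro summable_on_comparison_test[OF weight_tail_summable])
       (auto intro: mult_left_le)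
  then show ?thesis by simp
qed

lemma truncated_kernel_last_row_sum:
  "(\<Sum>y\<in>{1..<N}. \<Sum>\<^sub>\<infinity>z\<in>{N..}. \<pi> z * P z y) + (\<Sum>\<^sub>\<infinity>z\<in>{N..}. \<pi> z * (\<Sum>\<^sub>\<infinity>u\<in>{N..}. P z u))
     = pibar \<pi> N"
    (is "(\<Sum>y\<in>{1..<N}. ?S y) + ?W = _")
proof -
  have z_pos: "1 \<le> z" if "N \<le> z" for z
    using that N_pos by simp
  have "((\<lambda>z. \<pi> z * P z y) has_sum ?S y) {N..}" if "y \<in> {1..<N}" for y
    using that z_pos P_nonneg P_le_one by (intro weighted_tail_has_sum[of "\<lambda>z. P z y"]) auto
  moreover have "((\<lambda>z. \<pi> z * (\<Sum>\<^sub>\<infinity>u\<in>{N..}. P z u)) has_sum ?W) {N..}"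
    using z_pos P_tail_nonneg P_tail_le_one by (intro weighted_tail_has_sum) auto
  ultimately have combined: "((\<lambda>z. (\<Sum>y\<in>{1..<N}. \<pi> z * P z y) + \<pi> z * (\<Sum>\<^sub>\<infinity>u\<in>{N..}. P z u)) has_sum
      (\<Sum>y\<in>{1..<N}. ?S y) + ?W) {N..}"
    by (intro has_sum_add has_sum_sum) auto
  have row: "(\<Sum>y\<in>{1..<N}. \<pi> z * P z y) + \<pi> z * (\<Sum>\<^sub>\<infinity>u\<in>{N..}. P z u) = \<pi> z"
    if "z \<in> {N..}" for z
    using P_row_split[of z] z_pos that by (simp flip: sum_distrib_left distrib_left)
  have "(\<pi> has_sum (\<Sum>y\<in>{1..<N}. ?S y) + ?W) {N..}"
    using combined by (rule has_sum_cong[THEN iffD1, rotated]) (rule row)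
  then show ?thesis
    unfolding pibar_def by (simp add: infsumI)
qed

lemma truncated_kernel_row_sum:
  assumes "x \<in> {1..N}"
  shows "(\<Sum>y\<in>{1..N}. truncated_kernel P \<pi> N x y) = 1"
proof -
  have "{1..N} = insert N {1..<N}" using N_pos by auto
  then have "(\<Sum>y\<in>{1..N}. truncated_kernel P \<pi> N x y)
      = (\<Sum>y\<in>{1..<N}. truncated_kernel P \<pi> N x y) + truncated_kernel P \<pi> N x N"
    by simp
  also have "\<dots> = 1"
  proof (cases "x < N")
    case True
    then show ?thesis
      using P_row_split assms by (simp add: truncated_kernel_def)
  next
    case False
    then show ?thesis
      using truncated_kernel_last_row_sum pibar_pos
      by (simp add: truncated_kernel_def flip: sum_divide_distrib add_divide_distrib)
  qed
  finally show ?thesis .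
qed

lemma truncated_kernel_nonneg:
  assumes "x \<in> {1..N}" and "y \<in> {1..N}"
  shows "0 \<le> truncated_kernel P \<pi> N x y"
proof -
  have "0 \<le> (\<Sum>\<^sub>\<infinity>z\<in>{N..}. \<pi> z * P z y)"
    and "0 \<le> (\<Sum>\<^sub>\<infinity>z\<in>{N..}. \<pi> z * (\<Sum>\<^sub>\<infinity>u\<in>{N..}. P z u))"
    using assms N_pos weight_nonneg P_nonneg P_tail_nonneg
    by (auto intro!: infsum_nonneg mult_nonneg_nonneg)
  then show ?thesis
    using assms pibar_pos P_nonneg P_tail_nonneg by (simp add: truncated_kernel_def)
qed

lemma stochastic_kernel_truncated_kernel: "stochastic_kernel {1..N} (truncated_kernel P \<pi> N)"
  unfolding stochastic_kernel_def
  using truncated_kernel_nonneg truncated_kernel_row_sum by (simp add: has_sum_finiteI)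

end

locale monotone_kernel_truncation = kernel_truncation +
  assumes monotone: "monotone_kernel {1..} P"
begin

lemma truncated_kernel_last_row_cumulative_le:
  assumes "1 \<le> x" and "x < N" and "y < N"
  shows "(\<Sum>z\<in>{1..y}. truncated_kernel P \<pi> N N z) \<le> (\<Sum>z\<in>{1..y}. P x z)"
proof -
  define F where "F = (\<Sum>z\<in>{1..y}. P x z)"
  have "((\<lambda>w. \<Sum>z\<in>{1..y}. \<pi> w * P w z) has_sum (\<Sum>z\<in>{1..y}. \<Sum>\<^sub>\<infinity>w\<in>{N..}. \<pi> w * P w z)) {N..}"
    using N_pos P_nonneg P_le_one by (intro has_sum_sum weighted_tail_has_sum) auto
  then have "(\<Sum>z\<in>{1..y}. \<Sum>\<^sub>\<infinity>w\<in>{N..}. \<pi> w * P w z) \<le> (\<Sum>\<^sub>\<infinity>w\<in>{N..}. \<pi> w * F)"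
  proof (rule has_sum_mono[OF _ has_sum_infsum])
    show "(\<lambda>w. \<pi> w * F) summable_on {N..}"
      using weight_tail_summable by (rule summable_on_cmult_left)
    fix w assume "w \<in> {N..}"
    then have "x \<le> w" and "0 \<le> \<pi> w"
      using assms N_pos weight_nonneg by auto
    moreover have "(\<Sum>z\<in>{1..y}. P w z) \<le> F"
      unfolding F_def using monotone_kernel_atLeast_cumulative_le[OF monotone assms(1) \<open>x \<le> w\<close>] .
    ultimately show "(\<Sum>z\<in>{1..y}. \<pi> w * P w z) \<le> \<pi> w * F"
      by (simp add: mult_left_mono flip: sum_distrib_left)
  qed
  also have "\<dots> = F * pibar \<pi> N"
    unfolding pibar_def by (simp add: infsum_cmult_left')
  finally show ?thesis
    using assms pibar_pos unfolding F_def
    by (simp add: truncated_kernel_def pos_divide_le_eq flip: sum_divide_distrib)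
qed

lemma monotone_kernel_truncated_kernel: "monotone_kernel {1..N} (truncated_kernel P \<pi> N)"
  unfolding monotone_kernel_def
proof (intro ballI impI)
  fix y x x' assume y: "y \<in> {1..N}" and x: "x \<in> {1..N}" and x': "x' \<in> {1..N}" and "x \<le> x'"
  let ?Q = "truncated_kernel P \<pi> N"
  have cumulative: "{z\<in>{1..N}. z \<le> y} = {1..y}"
    using y by auto
  have upper_rows: "(\<Sum>z\<in>{1..y}. ?Q u z) = (\<Sum>z\<in>{1..y}. P u z)" if "u < N" and "y < N" for u
    using that by (intro sum.cong) (auto simp: truncated_kernel_def)
  consider "y = N" | "y < N" "x' < N" | "y < N" "x < N" "x' = N" | "x = x'"
    using y x x' \<open>x \<le> x'\<close> by fastforce
  then have "(\<Sum>z\<in>{1..y}. ?Q x' z) \<le> (\<Sum>z\<in>{1..y}. ?Q x z)"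
  proof cases
    case 1
    then show ?thesis
      using truncated_kernel_row_sum x x' by simp
  next
    case 2
    then show ?thesis
      using x \<open>x \<le> x'\<close> upper_rows monotone_kernel_atLeast_cumulative_le[OF monotone] by simp
  next
    case 3
    then show ?thesis
      using x upper_rows truncated_kernel_last_row_cumulative_le by simp
  qed simp
  then show "(\<Sum>z\<in>{z\<in>{1..N}. z \<le> y}. ?Q x' z) \<le> (\<Sum>z\<in>{z\<in>{1..N}. z \<le> y}. ?Q x z)"
    unfolding cumulative .
qed

end

definition siegmund_dual :: "nat \<Rightarrow> (nat \<Rightarrow> nat \<Rightarrow> real) \<Rightarrow> nat \<Rightarrow> nat \<Rightarrow> real" where
  "siegmund_dual N Q y z =
     (\<Sum>u\<in>{1..y}. Q z u) - (if z < N then (\<Sum>u\<in>{1..y}. Q (Suc z) u) else 0)"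

lemma sum_siegmund_left:
  assumes "1 \<le> x"
  shows "(\<Sum>z\<in>{1..N}. siegmund x z * f z) = (\<Sum>z\<in>{x..N}. f z)"
proof -
  have "(\<Sum>z\<in>{1..N}. siegmund x z * f z) = (\<Sum>z\<in>{1..N}. if x \<le> z then f z else 0)"
    unfolding siegmund_def by (intro sum.cong) auto
  also have "\<dots> = (\<Sum>z\<in>{z\<in>{1..N}. x \<le> z}. f z)"
    by (simp only: sum.inter_filter[OF finite_atLeastAtMost])
  also have "{z\<in>{1..N}. x \<le> z} = {x..N}"
    using assms by auto
  finally show ?thesis .
qed

lemma sum_siegmund_right:
  assumes "y \<le> N"
  shows "(\<Sum>z\<in>{1..N}. f z * siegmund z y) = (\<Sum>z\<in>{1..y}. f z)"
proof -
  have "(\<Sum>z\<in>{1..N}. f z * siegmund z y) = (\<Sum>z\<in>{1..N}. if z \<le> y then f z else 0)"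
    unfolding siegmund_def by (intro sum.cong) auto
  also have "\<dots> = (\<Sum>z\<in>{z\<in>{1..N}. z \<le> y}. f z)"
    by (simp only: sum.inter_filter[OF finite_atLeastAtMost])
  also have "{z\<in>{1..N}. z \<le> y} = {1..y}"
    using assms by auto
  finally show ?thesis .
qed

lemma sum_siegmund_dual:
  "x \<le> N \<Longrightarrow> (\<Sum>z\<in>{x..N}. siegmund_dual N Q y z) = (\<Sum>u\<in>{1..y}. Q x u)"
proof (induction x rule: inc_induct)
  case (step x)
  then show ?case by (simp add: sum.atLeast_Suc_atMost siegmund_dual_def)
qed (simp add: siegmund_dual_def)

lemma siegmund_duality:
  assumes "x \<in> {1..N}" and "y \<in> {1..N}"
  shows "(\<Sum>z\<in>{1..N}. siegmund x z * siegmund_dual N Q y z) = (\<Sum>z\<in>{1..N}. Q x z * siegmund z y)"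
proof -
  have "(\<Sum>z\<in>{1..N}. siegmund x z * siegmund_dual N Q y z) = (\<Sum>z\<in>{x..N}. siegmund_dual N Q y z)"
    using assms by (intro sum_siegmund_left) auto
  also have "\<dots> = (\<Sum>u\<in>{1..y}. Q x u)"
    using assms by (intro sum_siegmund_dual) auto
  also have "\<dots> = (\<Sum>z\<in>{1..N}. Q x z * siegmund z y)"
    using assms by (intro sum_siegmund_right[symmetric]) auto
  finally show ?thesis .
qed

lemma siegmund_dual_nonneg:
  assumes "stochastic_kernel {1..N} Q" and "monotone_kernel {1..N} Q"
    and "y \<in> {1..N}" and "z \<in> {1..N}"
  shows "0 \<le> siegmund_dual N Q y z"
proof (cases "z < N")
  case True
  then have "z \<in> {1..N}" and "Suc z \<in> {1..N}" and "z \<le> Suc z"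
    using assms(4) by auto
  with assms(2,3) have "(\<Sum>u\<in>{u\<in>{1..N}. u \<le> y}. Q (Suc z) u) \<le> (\<Sum>u\<in>{u\<in>{1..N}. u \<le> y}. Q z u)"
    unfolding monotone_kernel_def by blast
  moreover have "{u\<in>{1..N}. u \<le> y} = {1..y}"
    using assms(3) by auto
  ultimately show ?thesis
    using True unfolding siegmund_dual_def by simp
next
  case False
  with assms(1,3,4) show ?thesis
    unfolding siegmund_dual_def stochastic_kernel_def by (auto intro!: sum_nonneg)
qed

lemma stochastic_kernel_finite_row_sum:
  assumes "finite I" and "stochastic_kernel I Q" and "x \<in> I"
  shows "(\<Sum>y\<in>I. Q x y) = 1"
proof -
  have "(Q x has_sum 1) I"
    using assms(2,3) unfolding stochastic_kernel_def by blast
  from has_sum_unique[OF this has_sum_finite[OF assms(1)]] show ?thesis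
    by simp
qed

lemma siegmund_dual_last_row:
  assumes "stochastic_kernel {1..N} Q" and "z \<in> {1..N}"
  shows "siegmund_dual N Q N z = (if z = N then 1 else 0)"
proof (cases "z < N")
  case True
  then have "Suc z \<in> {1..N}"
    by simp
  with True assms show ?thesis
    unfolding siegmund_dual_def by (simp add: stochastic_kernel_finite_row_sum)
next
  case False
  with assms show ?thesis
    unfolding siegmund_dual_def by (simp add: stochastic_kernel_finite_row_sum)
qed

lemma monotone_stochastic_kernel_has_siegmund_dual:
  assumes "stochastic_kernel {1..N} Q" and "monotone_kernel {1..N} Q"
  shows "\<exists>Ph :: nat \<Rightarrow> nat \<Rightarrow> real.
            (\<forall>x\<in>{1..N}. \<forall>y\<in>{1..N}. 0 \<le> Ph x y)
          \<and> (\<forall>x\<in>{1..N}. \<forall>y\<in>{1..N}.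
               (\<Sum>z\<in>{1..N}. siegmund x z * Ph y z) = (\<Sum>z\<in>{1..N}. Q x z * siegmund z y))
          \<and> (\<forall>y\<in>{1..N}. Ph N y = (if y = N then 1 else 0))"
  using siegmund_dual_nonneg[OF assms] siegmund_duality siegmund_dual_last_row[OF assms(1)]
  by (intro exI[of _ "siegmund_dual N Q"]) blast

theorem proposition4:
  fixes P :: "nat \<Rightarrow> nat \<Rightarrow> real" and \<pi> :: "nat \<Rightarrow> real" and N :: nat
  assumes "stochastic_kernel {1..} P"
    and "monotone_kernel {1..} P"
    and "irreducible_kernel {1..} P"
    and "positive_recurrent {1..} P"
    and "stationary_distribution {1..} P \<pi>"
    and "\<forall>x\<ge>1. \<pi> x > 0"
    and "N \<ge> 2"
  shows "stochastic_kernel {1..N} (truncated_kernel P \<pi> N)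
       \<and> monotone_kernel {1..N} (truncated_kernel P \<pi> N)
       \<and> (\<exists>Ph :: nat \<Rightarrow> nat \<Rightarrow> real.
            (\<forall>x\<in>{1..N}. \<forall>y\<in>{1..N}. 0 \<le> Ph x y)
          \<and> (\<forall>x\<in>{1..N}. \<forall>y\<in>{1..N}.
               (\<Sum>z\<in>{1..N}. siegmund x z * Ph y z)
             = (\<Sum>z\<in>{1..N}. truncated_kernel P \<pi> N x z * siegmund z y))
          \<and> (\<forall>y\<in>{1..N}. Ph N y = (if y = N then 1 else 0)))"
proof -
  have weight_nonneg: "\<And>x. 1 \<le> x \<Longrightarrow> 0 \<le> \<pi> x"
    using assms(6) by (simp add: less_imp_le)
  have weight_summable: "\<pi> summable_on {1..}"
    using assms(5) unfolding stationary_distribution_def summable_on_def by blast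
  have N_pos: "1 \<le> N"
    using assms(7) by simp
  have "\<pi> N \<le> pibar \<pi> N"
    unfolding pibar_def
    using finite_sum_le_infsum[of \<pi> "{N..}" "{N}"] summable_on_subset_banach[OF weight_summable, of "{N..}"]
      N_pos weight_nonneg by auto
  then have pibar_pos: "0 < pibar \<pi> N"
    using assms(6) N_pos by force
  interpret monotone_kernel_truncation P \<pi> N
    by unfold_locales (fact assms(1) weight_nonneg weight_summable pibar_pos N_pos assms(2))+
  show ?thesis
    using stochastic_kernel_truncated_kernel monotone_kernel_truncated_kernel
      monotone_stochastic_kernel_has_siegmund_dual by blast
qed

end
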